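(* Let $\Gamma=(V,m,\tau)$ be a weak $W$-graph and let $A\subseteq\Delta$. Then the image of the operator $R(A)=\frac{1}{|W(A)|}\sum_{g\in W(A)}\operatorname{sgn}(g)\,g$ acting on $\mathbb{C}V$ is exactly the span of $V(A,-)=\{v\in V: A\subseteq\tau(v)\}$.
   Context: $W$ is a Weyl group with a fixed set $\Delta$ of simple roots; for a root $\alpha$, $s_\alpha$ is the reflection in the hyperplane orthogonal to $\alpha$, and $\operatorname{sgn}:W\to\{\pm1\}$ is the sign character ($\operatorname{sgn}(s_\alpha)=-1$). A weak $W$-graph is a triple $\Gamma=(V,m,\tau)$ where $V$ is a finite set, $m:V\times V\to\mathbb{C}$ is a map, and $\tau$ is a map from $V$ to the power set of $\Delta$, such that the linear maps $s_\alpha:\mathbb{C}V\to\mathbb{C}V$ ($\alpha\in\Delta$) given on basis vectors by $s_\alpha(v)=-v$ if $\alpha\in\tau(v)$ and $s_\alpha(v)=v-\sum_{u\in V,\ \alpha\in\tau(u)} m(u,v)u$ if $\alpha\notin\tau(v)$ define a representation of $W$ on $\mathbb{C}V$. For $A\subseteq\Delta$, $W(A)$ is the subgroup of $W$ generated by $\{s_\alpha:\alpha\in A\}$. *)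

theory Defs
  imports "HOL-Analysis.Analysis" "HOL-Library.Function_Algebras"
begin

definition refl :: "real^'n \<Rightarrow> real^'n \<Rightarrow> real^'n" where
  "refl \<alpha> x = x - (2 * (x \<bullet> \<alpha>) / (\<alpha> \<bullet> \<alpha>)) *\<^sub>R \<alpha>"

definition root_system :: "(real^'n) set \<Rightarrow> bool" where
  "root_system \<Phi> \<longleftrightarrow> finite \<Phi> \<and> 0 \<notin> \<Phi> \<and>
     (\<forall>\<alpha>\<in>\<Phi>. \<forall>\<beta>\<in>\<Phi>. refl \<alpha> \<beta> \<in> \<Phi>) \<and>
     (\<forall>\<alpha>\<in>\<Phi>. \<forall>\<beta>\<in>\<Phi>. 2 * (\<beta> \<bullet> \<alpha>) / (\<alpha> \<bullet> \<alpha>) \<in> \<int>) \<and>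
     (\<forall>\<alpha>\<in>\<Phi>. \<forall>c. c *\<^sub>R \<alpha> \<in> \<Phi> \<longrightarrow> c = 1 \<or> c = -1)"

definition simple_system :: "(real^'n) set \<Rightarrow> (real^'n) set \<Rightarrow> bool" where
  "simple_system \<Phi> \<Delta> \<longleftrightarrow> \<Delta> \<subseteq> \<Phi> \<and> independent \<Delta> \<and>
     (\<forall>\<beta>\<in>\<Phi>. \<exists>c :: real^'n \<Rightarrow> int. \<beta> = (\<Sum>\<alpha>\<in>\<Delta>. of_int (c \<alpha>) *\<^sub>R \<alpha>) \<and>
        ((\<forall>\<alpha>\<in>\<Delta>. c \<alpha> \<ge> 0) \<or> (\<forall>\<alpha>\<in>\<Delta>. c \<alpha> \<le> 0)))"

text \<open>W(A): the group generated by the reflections s_alpha, alpha in A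
  (each s_alpha is an involution, so the monoid closure is the generated group).
  The Weyl group is W = W(Delta).\<close>
inductive_set weyl_subgroup :: "(real^'n) set \<Rightarrow> (real^'n \<Rightarrow> real^'n) set"
  for A :: "(real^'n) set" where
  id_in: "id \<in> weyl_subgroup A"
| refl_comp: "g \<in> weyl_subgroup A \<Longrightarrow> \<alpha> \<in> A \<Longrightarrow> refl \<alpha> \<circ> g \<in> weyl_subgroup A"

text \<open>The sign character: the determinant (sgn(s_alpha) = -1).\<close>
definition sgn_W :: "(real^'n \<Rightarrow> real^'n) \<Rightarrow> real" where
  "sgn_W g = det (matrix g)"

definition CV :: "'v set \<Rightarrow> ('v \<Rightarrow> complex) set" where
  "CV V = {x. \<forall>u. u \<notin> V \<longrightarrow> x u = 0}"

definition basis_vec :: "'v \<Rightarrow> 'v \<Rightarrow> complex" where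
  "basis_vec v = (\<lambda>u. if u = v then 1 else 0)"

definition cscale :: "complex \<Rightarrow> ('v \<Rightarrow> complex) \<Rightarrow> ('v \<Rightarrow> complex)" where
  "cscale c x = (\<lambda>u. c * x u)"

text \<open>Action of s_alpha on the basis vector v.\<close>
definition wg_basis ::
  "'v set \<Rightarrow> ('v \<Rightarrow> 'v \<Rightarrow> complex) \<Rightarrow> ('v \<Rightarrow> 'a set) \<Rightarrow> 'a \<Rightarrow> 'v \<Rightarrow> ('v \<Rightarrow> complex)" where
  "wg_basis V m \<tau> \<alpha> v =
     (if \<alpha> \<in> \<tau> v then cscale (-1) (basis_vec v)
      else basis_vec v - (\<Sum>u\<in>{u\<in>V. \<alpha> \<in> \<tau> u}. cscale (m u v) (basis_vec u)))"

definition wg_op ::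
  "'v set \<Rightarrow> ('v \<Rightarrow> 'v \<Rightarrow> complex) \<Rightarrow> ('v \<Rightarrow> 'a set) \<Rightarrow> 'a \<Rightarrow> ('v \<Rightarrow> complex) \<Rightarrow> ('v \<Rightarrow> complex)" where
  "wg_op V m \<tau> \<alpha> x = (\<Sum>v\<in>V. cscale (x v) (wg_basis V m \<tau> \<alpha> v))"

definition W_graph_rep ::
  "(real^'n) set \<Rightarrow> 'v set \<Rightarrow> ('v \<Rightarrow> 'v \<Rightarrow> complex) \<Rightarrow> ('v \<Rightarrow> (real^'n) set)
    \<Rightarrow> ((real^'n \<Rightarrow> real^'n) \<Rightarrow> ('v \<Rightarrow> complex) \<Rightarrow> ('v \<Rightarrow> complex)) \<Rightarrow> bool" where
  "W_graph_rep \<Delta> V m \<tau> \<rho> \<longleftrightarrow>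
     (\<forall>x\<in>CV V. \<rho> id x = x) \<and>
     (\<forall>g\<in>weyl_subgroup \<Delta>. \<forall>h\<in>weyl_subgroup \<Delta>. \<forall>x\<in>CV V. \<rho> (g \<circ> h) x = \<rho> g (\<rho> h x)) \<and>
     (\<forall>\<alpha>\<in>\<Delta>. \<forall>x\<in>CV V. \<rho> (refl \<alpha>) x = wg_op V m \<tau> \<alpha> x)"

definition weak_W_graph ::
  "(real^'n) set \<Rightarrow> 'v set \<Rightarrow> ('v \<Rightarrow> 'v \<Rightarrow> complex) \<Rightarrow> ('v \<Rightarrow> (real^'n) set) \<Rightarrow> bool" where
  "weak_W_graph \<Delta> V m \<tau> \<longleftrightarrow> finite V \<and> (\<forall>v\<in>V. \<tau> v \<subseteq> \<Delta>) \<and>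
     (\<exists>\<rho>. W_graph_rep \<Delta> V m \<tau> \<rho>)"

definition R_op ::
  "(real^'n) set \<Rightarrow> ((real^'n \<Rightarrow> real^'n) \<Rightarrow> ('v \<Rightarrow> complex) \<Rightarrow> ('v \<Rightarrow> complex))
     \<Rightarrow> ('v \<Rightarrow> complex) \<Rightarrow> ('v \<Rightarrow> complex)" where
  "R_op A \<rho> x = cscale (1 / of_nat (card (weyl_subgroup A)))
       (\<Sum>g\<in>weyl_subgroup A. cscale (complex_of_real (sgn_W g)) (\<rho> g x))"

end

theory Submission
  imports Defs
begin

text \<open>Up to normalisation, \<open>R(A)\<close> is the sign idempotent of \<open>W(A)\<close>. Left multiplication by
  \<open>s\<^sub>\<alpha>\<close>, \<open>\<alpha> \<in> A\<close>, permutes \<open>W(A)\<close> and flips the sign, so \<open>s\<^sub>\<alpha> R(A) = -R(A)\<close>. But \<open>s\<^sub>\<alpha>\<close>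
  leaves the coordinate at every vertex \<open>v\<close> with \<open>\<alpha> \<notin> \<tau>(v)\<close> unchanged, so these coordinates
  of \<open>R(A) x\<close> vanish and the image lies in the span of \<open>V(A,-)\<close>. Conversely each \<open>s\<^sub>\<alpha>\<close>,
  \<open>\<alpha> \<in> A\<close>, acts as \<open>-1\<close> on that span, so every \<open>g \<in> W(A)\<close> acts there as \<open>sgn(g)\<close> and \<open>R(A)\<close>
  is the identity on it. \<open>W(A)\<close> is finite because it permutes the finite root system
  and each of its elements is determined by that permutation.\<close>

lemma refl_zero [simp]: "refl 0 = id"
  by (simp add: refl_def fun_eq_iff)

lemma linear_refl: "linear (refl a)"
  unfolding refl_def
  by (intro linearI) (auto simp: algebra_simps add_divide_distrib)

lemma refl_inner_refl: "refl a x \<bullet> refl a y = x \<bullet> y"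
proof (cases "a = 0")
  case False
  then have "a \<bullet> a \<noteq> 0" by simp
  then show ?thesis unfolding refl_def
    by (simp add: inner_commute algebra_simps)
qed simp

lemma refl_refl: "refl a (refl a x) = x"
proof (cases "a = 0")
  case False
  then have "a \<bullet> a \<noteq> 0" by simp
  then show ?thesis unfolding refl_def
    by (simp add: algebra_simps)
qed simp

lemma refl_diff_in_span: "refl a x - x \<in> span {a}"
proof -
  have "refl a x - x = (- (2 * (x \<bullet> a) / (a \<bullet> a))) *\<^sub>R a"
    by (simp add: refl_def)
  also have "\<dots> \<in> span {a}"
    by (rule span_mul[OF span_base]) simp
  finally show ?thesis .
qed

lemma refl_scaleR: "c \<noteq> 0 \<Longrightarrow> refl (c *\<^sub>R a) = refl a"
  by (auto simp: refl_def fun_eq_iff field_simps power2_eq_square)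

lemma det_matrix_refl_axis: "det (matrix (refl (axis k (1::real)) :: real^'n \<Rightarrow> real^'n)) = -1"
proof -
  let ?M = "matrix (refl (axis k (1::real)) :: real^'n \<Rightarrow> real^'n)"
  have entries: "?M $ i $ j = (if i = j then (if i = k then -1 else 1) else 0)" for i j
    by (simp add: matrix_def refl_def inner_axis_axis) (simp add: axis_def)
  have "det ?M = (\<Prod>i\<in>UNIV. ?M $ i $ i)"
    by (rule det_diagonal) (simp add: entries)
  also have "\<dots> = (\<Prod>i\<in>UNIV. if i = k then -1 else 1)"
    by (simp add: entries)
  finally show ?thesis
    by simp
qed

text \<open>Conjugate by an orthogonal matrix sending a coordinate axis to the unit vector along \<open>a\<close>.\<close>
lemma det_matrix_refl:
  fixes a :: "real^'n"
  assumes "a \<noteq> 0"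
  shows "det (matrix (refl a)) = -1"
proof -
  define u where "u = a /\<^sub>R norm a"
  have norm_u: "norm u = 1"
    using assms by (simp add: u_def)
  have refl_u: "refl a = refl u"
    using refl_scaleR[of "inverse (norm a)" a] assms by (simp add: u_def divide_inverse_commute)
  fix k :: 'n
  let ?e = "axis k (1::real) :: real^'n"
  obtain Q where Q: "orthogonal_matrix Q" "Q *v ?e = u"
    using orthogonal_matrix_exists_basis[OF norm_u] by metis
  have "Q ** transpose Q = mat 1"
    using Q(1) by (simp add: orthogonal_matrix_def)
  then have Q_transpose: "Q *v (transpose Q *v x) = x" for x
    by (simp only: matrix_vector_mul_assoc matrix_vector_mul_lid)
  have conj: "refl u = (\<lambda>x. Q *v x) \<circ> refl ?e \<circ> (\<lambda>x. transpose Q *v x)"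
  proof
    fix x
    have "(transpose Q *v x) \<bullet> ?e = x \<bullet> u"
      by (simp add: dot_lmul_matrix Q(2))
    then show "refl u x = ((\<lambda>x. Q *v x) \<circ> refl ?e \<circ> (\<lambda>x. transpose Q *v x)) x"
      using norm_u Q_transpose
      by (simp add: refl_def inner_axis_axis matrix_vector_mult_diff_distrib
          matrix_vector_mult_scaleR Q(2) norm_eq_1)
  qed
  have "matrix (refl u) = Q ** matrix (refl ?e) ** transpose Q"
    unfolding conj by (simp add: matrix_compose linear_refl linear_compose)
  then have "det (matrix (refl u)) = - (det Q * det Q)"
    by (simp add: det_mul det_matrix_refl_axis)
  then show ?thesis
    using det_orthogonal_matrix[OF Q(1)] refl_u by auto
qed

lemma weyl_subgroup_mono: "A \<subseteq> B \<Longrightarrow> weyl_subgroup A \<subseteq> weyl_subgroup B"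
proof
  show "g \<in> weyl_subgroup B" if "g \<in> weyl_subgroup A" "A \<subseteq> B" for g
    using that by (induction rule: weyl_subgroup.induct) (auto intro: weyl_subgroup.intros)
qed

lemma refl_in_weyl_subgroup: "\<alpha> \<in> A \<Longrightarrow> refl \<alpha> \<in> weyl_subgroup A"
  using weyl_subgroup.refl_comp[OF weyl_subgroup.id_in] by simp

lemma linear_weyl_subgroup: "g \<in> weyl_subgroup A \<Longrightarrow> linear g"
proof (induction rule: weyl_subgroup.induct)
  case (refl_comp g \<alpha>)
  then show ?case
    using linear_compose linear_refl by blast
qed (rule linear_id)

lemma weyl_subgroup_inner: "g \<in> weyl_subgroup A \<Longrightarrow> g x \<bullet> g y = x \<bullet> y"
  by (induction rule: weyl_subgroup.induct) (simp_all add: refl_inner_refl)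

lemma weyl_subgroup_diff_in_span: "g \<in> weyl_subgroup A \<Longrightarrow> g x - x \<in> span A"
proof (induction rule: weyl_subgroup.induct)
  case (refl_comp g \<alpha>)
  have "refl \<alpha> (g x) - g x \<in> span A"
    using refl_diff_in_span span_mono refl_comp.hyps(2) by blast
  then have "(refl \<alpha> (g x) - g x) + (g x - x) \<in> span A"
    using refl_comp.IH by (rule span_add)
  then show ?case by simp
qed (simp add: span_zero)

lemma weyl_subgroup_image_subset:
  assumes "g \<in> weyl_subgroup A" "A \<subseteq> \<Phi>" "\<forall>\<alpha>\<in>\<Phi>. \<forall>\<beta>\<in>\<Phi>. refl \<alpha> \<beta> \<in> \<Phi>"
  shows "g ` \<Phi> \<subseteq> \<Phi>"
  using assms(1)
proof (induction rule: weyl_subgroup.induct)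
  case (refl_comp g \<alpha>)
  then show ?case
    using assms(2,3) by (auto simp: image_subset_iff)
qed simp

text \<open>Both maps move every vector only inside \<open>span \<Phi>\<close>, and the difference \<open>g x - h x\<close> is
  orthogonal to \<open>\<Phi> = g ` \<Phi>\<close> because \<open>g\<close> and \<open>h\<close> are orthogonal and agree on \<open>\<Phi>\<close>.\<close>
lemma weyl_subgroup_eqI:
  assumes \<Phi>: "finite \<Phi>" "A \<subseteq> \<Phi>" "\<forall>\<alpha>\<in>\<Phi>. \<forall>\<beta>\<in>\<Phi>. refl \<alpha> \<beta> \<in> \<Phi>"
    and g: "g \<in> weyl_subgroup A" and h: "h \<in> weyl_subgroup A"
    and agree: "\<And>\<beta>. \<beta> \<in> \<Phi> \<Longrightarrow> g \<beta> = h \<beta>"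
  shows "g = h"
proof
  fix x
  have "inj g"
  proof (rule injI)
    fix a b
    assume "g a = g b"
    then have "g (a - b) = 0"
      using linear_diff[OF linear_weyl_subgroup[OF g]] by simp
    then show "a = b"
      using weyl_subgroup_inner[OF g, of "a - b" "a - b"] by simp
  qed
  then have g_onto: "g ` \<Phi> = \<Phi>"
    using endo_inj_surj[OF \<Phi>(1) weyl_subgroup_image_subset[OF g \<Phi>(2,3)]] inj_on_subset by blast
  define y where "y = g x - h x"
  have "g x - x \<in> span \<Phi>" "h x - x \<in> span \<Phi>"
    using weyl_subgroup_diff_in_span[OF g] weyl_subgroup_diff_in_span[OF h] span_mono[OF \<Phi>(2)]
    by blast+
  then have "(g x - x) - (h x - x) \<in> span \<Phi>"
    by (rule span_diff)
  then have "y \<in> span \<Phi>"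
    by (simp add: y_def)
  moreover have "orthogonal y \<beta>" if "\<beta> \<in> \<Phi>" for \<beta>
  proof -
    obtain \<gamma> where \<gamma>: "\<gamma> \<in> \<Phi>" "\<beta> = g \<gamma>"
      using g_onto \<open>\<beta> \<in> \<Phi>\<close> by blast
    have "y \<bullet> \<beta> = g x \<bullet> g \<gamma> - h x \<bullet> h \<gamma>"
      by (simp add: y_def \<gamma>(2) inner_diff_left agree[OF \<gamma>(1)])
    then show ?thesis
      by (simp add: orthogonal_def weyl_subgroup_inner[OF g] weyl_subgroup_inner[OF h])
  qed
  ultimately have "orthogonal y y"
    by (rule orthogonal_to_span)
  then show "g x = h x"
    by (simp add: orthogonal_def y_def)
qed

lemma finite_weyl_subgroup:
  assumes \<Phi>: "finite \<Phi>" "A \<subseteq> \<Phi>" "\<forall>\<alpha>\<in>\<Phi>. \<forall>\<beta>\<in>\<Phi>. refl \<alpha> \<beta> \<in> \<Phi>"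
  shows "finite (weyl_subgroup A)"
proof (rule finite_imageD)
  show "inj_on (\<lambda>g. restrict g \<Phi>) (weyl_subgroup A)"
  proof (rule inj_onI)
    fix g h
    assume g: "g \<in> weyl_subgroup A" and h: "h \<in> weyl_subgroup A"
      and restrict_eq: "restrict g \<Phi> = restrict h \<Phi>"
    have "g \<beta> = h \<beta>" if "\<beta> \<in> \<Phi>" for \<beta>
      using fun_cong[OF restrict_eq, of \<beta>] that by simp
    then show "g = h"
      by (rule weyl_subgroup_eqI[OF \<Phi> g h])
  qed
  have "restrict g \<Phi> \<in> Pi\<^sub>E \<Phi> (\<lambda>_. \<Phi>)" if "g \<in> weyl_subgroup A" for g
    using weyl_subgroup_image_subset[OF that \<Phi>(2,3)] by (auto simp: PiE_iff)
  then have "(\<lambda>g. restrict g \<Phi>) ` weyl_subgroup A \<subseteq> Pi\<^sub>E \<Phi> (\<lambda>_. \<Phi>)"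
    by blast
  then show "finite ((\<lambda>g. restrict g \<Phi>) ` weyl_subgroup A)"
    by (rule finite_subset) (simp add: finite_PiE \<Phi>(1))
qed

lemma bij_betw_refl_comp_weyl_subgroup:
  assumes "\<alpha> \<in> A"
  shows "bij_betw ((\<circ>) (refl \<alpha>)) (weyl_subgroup A) (weyl_subgroup A)"
  by (rule bij_betwI[where g = "(\<circ>) (refl \<alpha>)"])
    (auto simp: assms weyl_subgroup.refl_comp comp_assoc[symmetric] refl_refl fun_eq_iff)

lemma sgn_W_id: "sgn_W (id :: real^'n \<Rightarrow> real^'n) = 1"
  by (simp add: sgn_W_def matrix_id_mat_1)

lemma sgn_W_refl_comp:
  fixes \<alpha> :: "real^'n"
  assumes "linear g" "\<alpha> \<noteq> 0"
  shows "sgn_W (refl \<alpha> \<circ> g) = - sgn_W g"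
  by (simp add: sgn_W_def matrix_compose[OF assms(1) linear_refl] det_mul det_matrix_refl[OF assms(2)])

lemma sgn_W_weyl_subgroup_square: "g \<in> weyl_subgroup A \<Longrightarrow> 0 \<notin> A \<Longrightarrow> (sgn_W g)\<^sup>2 = 1"
proof (induction rule: weyl_subgroup.induct)
  case (refl_comp g \<alpha>)
  then have "\<alpha> \<noteq> 0" by auto
  then have "sgn_W (refl \<alpha> \<circ> g) = - sgn_W g"
    using sgn_W_refl_comp linear_weyl_subgroup[OF refl_comp.hyps(1)] by blast
  then have "(sgn_W (refl \<alpha> \<circ> g))\<^sup>2 = (sgn_W g)\<^sup>2"
    by (simp only: power2_minus)
  then show ?case
    using refl_comp.IH refl_comp.prems by argo
qed (simp add: sgn_W_id)

lemma cscale_apply [simp]: "cscale c x u = c * x u"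
  by (simp add: cscale_def)

lemma sum_apply: "(\<Sum>s\<in>S. f s) u = (\<Sum>s\<in>S. f s u)"
  by (induction S rule: infinite_finite_induct) auto

lemma cscale_sum: "cscale c (\<Sum>s\<in>S. f s) = (\<Sum>s\<in>S. cscale c (f s))"
  by (rule ext) (simp add: sum_apply sum_distrib_left)

lemma module_cscale: "module cscale"
  by unfold_locales (auto simp: cscale_def fun_eq_iff algebra_simps)

lemma CV_mono: "U \<subseteq> V \<Longrightarrow> CV U \<subseteq> CV V"
  by (auto simp: CV_def)

lemma subspace_CV: "module.subspace cscale (CV V)"
  by (simp add: module.subspace_def[OF module_cscale] CV_def)

lemma span_basis_vec:
  assumes "finite T"
  shows "module.span cscale (basis_vec ` T) = CV T"
proof
  have "basis_vec ` T \<subseteq> CV T"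
    by (auto simp: CV_def basis_vec_def)
  then show "module.span cscale (basis_vec ` T) \<subseteq> CV T"
    using module.span_minimal[OF module_cscale _ subspace_CV] by blast
next
  show "CV T \<subseteq> module.span cscale (basis_vec ` T)"
  proof
    fix x
    assume x: "x \<in> CV T"
    have "x = (\<Sum>t\<in>T. cscale (x t) (basis_vec t))"
    proof
      fix u
      show "x u = (\<Sum>t\<in>T. cscale (x t) (basis_vec t)) u"
        using assms x by (auto simp: sum_apply basis_vec_def CV_def if_distrib cong: if_cong)
    qed
    also have "\<dots> \<in> module.span cscale (basis_vec ` T)"
      by (intro module.span_sum[OF module_cscale] module.span_scale[OF module_cscale]
          module.span_base[OF module_cscale] imageI)
    finally show "x \<in> module.span cscale (basis_vec ` T)" .
  qed
qed

lemma wg_op_apply: "finite V \<Longrightarrow> wg_op V m \<tau> \<alpha> x w = (\<Sum>v\<in>V. x v * wg_basis V m \<tau> \<alpha> v w)"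
  by (simp add: wg_op_def sum_apply)

lemma wg_basis_apply:
  assumes "finite V"
  shows "wg_basis V m \<tau> \<alpha> v w = (if \<alpha> \<in> \<tau> v then - basis_vec v w
      else basis_vec v w - (if w \<in> V \<and> \<alpha> \<in> \<tau> w then m w v else 0))"
proof (cases "\<alpha> \<in> \<tau> v")
  case False
  have "(\<Sum>u\<in>{u\<in>V. \<alpha> \<in> \<tau> u}. cscale (m u v) (basis_vec u)) w
      = (\<Sum>u\<in>{u\<in>V. \<alpha> \<in> \<tau> u}. if w = u then m u v else 0)"
    by (simp add: sum_apply basis_vec_def if_distrib cong: if_cong)
  also have "\<dots> = (if w \<in> V \<and> \<alpha> \<in> \<tau> w then m w v else 0)"
    using assms by simp
  finally show ?thesis
    using False by (simp add: wg_basis_def)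
qed (simp add: wg_basis_def)

lemma wg_op_in_CV: "finite V \<Longrightarrow> wg_op V m \<tau> \<alpha> x \<in> CV V"
  by (auto simp: CV_def wg_op_apply wg_basis_apply basis_vec_def intro!: sum.neutral)

lemma wg_op_cscale: "finite V \<Longrightarrow> wg_op V m \<tau> \<alpha> (cscale c x) = cscale c (wg_op V m \<tau> \<alpha> x)"
  by (rule ext) (simp add: wg_op_apply sum_distrib_left mult.assoc)

lemma wg_op_sum:
  "finite V \<Longrightarrow> wg_op V m \<tau> \<alpha> (\<Sum>s\<in>S. f s) = (\<Sum>s\<in>S. wg_op V m \<tau> \<alpha> (f s))"
  by (rule ext) (simp add: wg_op_apply sum_apply sum_distrib_right sum.swap[of _ V])

lemma wg_op_apply_notin:
  assumes "finite V" "x \<in> CV V" "\<alpha> \<notin> \<tau> w"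
  shows "wg_op V m \<tau> \<alpha> x w = x w"
proof -
  have "wg_op V m \<tau> \<alpha> x w = (\<Sum>v\<in>V. if w = v then x v else 0)"
    unfolding wg_op_apply[OF assms(1)]
    by (rule sum.cong) (use assms(3) in \<open>auto simp: wg_basis_apply[OF assms(1)] basis_vec_def\<close>)
  also have "\<dots> = x w"
    using assms(1,2) by (simp add: CV_def)
  finally show ?thesis .
qed

lemma wg_op_eq_neg:
  assumes "finite V" "x \<in> CV {v\<in>V. \<alpha> \<in> \<tau> v}"
  shows "wg_op V m \<tau> \<alpha> x = cscale (-1) x"
proof
  fix w
  have "wg_op V m \<tau> \<alpha> x w = (\<Sum>v\<in>V. if w = v then - x v else 0)"
    unfolding wg_op_apply[OF assms(1)]
    by (rule sum.cong) (use assms(2) in \<open>auto simp: wg_basis_apply[OF assms(1)] basis_vec_def CV_def\<close>)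
  also have "\<dots> = - x w"
    using assms by (simp add: CV_def)
  finally show "wg_op V m \<tau> \<alpha> x w = cscale (-1) x w"
    by simp
qed

text \<open>Of the root system axioms, the argument only needs \<open>0 \<notin> \<Delta>\<close> (for the sign character)
  and the finiteness of the Weyl group (for the normalisation \<open>1 / |W(A)|\<close>).\<close>
locale W_graph_representation =
  fixes \<Delta> :: "(real^'n) set" and V :: "'v set" and m :: "'v \<Rightarrow> 'v \<Rightarrow> complex"
    and \<tau> :: "'v \<Rightarrow> (real^'n) set"
    and \<rho> :: "(real^'n \<Rightarrow> real^'n) \<Rightarrow> ('v \<Rightarrow> complex) \<Rightarrow> ('v \<Rightarrow> complex)"
  assumes finite_V: "finite V"
    and rep: "W_graph_rep \<Delta> V m \<tau> \<rho>"
    and simple_roots_nonzero: "0 \<notin> \<Delta>"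
    and finite_weyl_group: "finite (weyl_subgroup \<Delta>)"
begin

lemma rho_id: "x \<in> CV V \<Longrightarrow> \<rho> id x = x"
  using rep by (simp add: W_graph_rep_def)

lemma rho_comp:
  "g \<in> weyl_subgroup \<Delta> \<Longrightarrow> h \<in> weyl_subgroup \<Delta> \<Longrightarrow> x \<in> CV V \<Longrightarrow> \<rho> (g \<circ> h) x = \<rho> g (\<rho> h x)"
  using rep by (simp add: W_graph_rep_def)

lemma rho_refl: "\<alpha> \<in> \<Delta> \<Longrightarrow> x \<in> CV V \<Longrightarrow> \<rho> (refl \<alpha>) x = wg_op V m \<tau> \<alpha> x"
  using rep by (simp add: W_graph_rep_def)

lemma rho_in_CV: "g \<in> weyl_subgroup \<Delta> \<Longrightarrow> x \<in> CV V \<Longrightarrow> \<rho> g x \<in> CV V"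
proof (induction rule: weyl_subgroup.induct)
  case id_in
  then show ?case by (simp only: rho_id)
next
  case (refl_comp g \<alpha>)
  then have "\<rho> (refl \<alpha> \<circ> g) x = wg_op V m \<tau> \<alpha> (\<rho> g x)"
    by (simp only: rho_comp refl_in_weyl_subgroup rho_refl)
  then show ?case
    using wg_op_in_CV[OF finite_V] by (simp only:)
qed

lemma rho_refl_comp:
  "g \<in> weyl_subgroup \<Delta> \<Longrightarrow> \<alpha> \<in> \<Delta> \<Longrightarrow> x \<in> CV V \<Longrightarrow> \<rho> (refl \<alpha> \<circ> g) x = wg_op V m \<tau> \<alpha> (\<rho> g x)"
  by (simp only: rho_comp refl_in_weyl_subgroup rho_refl rho_in_CV)

lemma sgn_W_refl_comp_simple:
  assumes "g \<in> weyl_subgroup \<Delta>" "\<alpha> \<in> \<Delta>"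
  shows "sgn_W (refl \<alpha> \<circ> g) = - sgn_W g"
proof -
  have "\<alpha> \<noteq> 0"
    using assms(2) simple_roots_nonzero by auto
  then show ?thesis
    by (rule sgn_W_refl_comp[OF linear_weyl_subgroup[OF assms(1)]])
qed

lemma finite_weyl_subgroup_subset: "A \<subseteq> \<Delta> \<Longrightarrow> finite (weyl_subgroup A)"
  using finite_subset[OF weyl_subgroup_mono finite_weyl_group] .

lemma R_op_in_CV:
  assumes "A \<subseteq> \<Delta>" "x \<in> CV V"
  shows "R_op A \<rho> x \<in> CV V"
proof -
  have "\<rho> g x \<in> CV V" if "g \<in> weyl_subgroup A" for g
    using rho_in_CV weyl_subgroup_mono[OF assms(1)] that assms(2) by blast
  then show ?thesis
    unfolding R_op_def
    by (intro module.subspace_scale[OF module_cscale subspace_CV]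
        module.subspace_sum[OF module_cscale subspace_CV])
qed

lemma wg_op_R_op:
  assumes A: "A \<subseteq> \<Delta>" and \<alpha>: "\<alpha> \<in> A" and x: "x \<in> CV V"
  shows "wg_op V m \<tau> \<alpha> (R_op A \<rho> x) = cscale (-1) (R_op A \<rho> x)"
proof -
  let ?N = "1 / of_nat (card (weyl_subgroup A))"
  let ?F = "\<lambda>g. cscale (complex_of_real (sgn_W g)) (\<rho> g x)"
  have step: "cscale (complex_of_real (sgn_W g)) (wg_op V m \<tau> \<alpha> (\<rho> g x))
      = cscale (-1) (?F (refl \<alpha> \<circ> g))" if g: "g \<in> weyl_subgroup A" for g
  proof -
    have "g \<in> weyl_subgroup \<Delta>" "\<alpha> \<in> \<Delta>"
      using g \<alpha> A weyl_subgroup_mono by blast+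
    then show ?thesis
      using rho_refl_comp[OF _ _ x] sgn_W_refl_comp_simple by (simp add: fun_eq_iff)
  qed
  have reindex: "(\<Sum>g\<in>weyl_subgroup A. ?F (refl \<alpha> \<circ> g)) = (\<Sum>g\<in>weyl_subgroup A. ?F g)"
    by (rule sum.reindex_bij_betw[OF bij_betw_refl_comp_weyl_subgroup[OF \<alpha>]])
  have "wg_op V m \<tau> \<alpha> (R_op A \<rho> x)
      = cscale ?N (\<Sum>g\<in>weyl_subgroup A. cscale (complex_of_real (sgn_W g)) (wg_op V m \<tau> \<alpha> (\<rho> g x)))"
    by (simp add: R_op_def wg_op_cscale[OF finite_V] wg_op_sum[OF finite_V])
  also have "\<dots> = cscale ?N (cscale (-1) (\<Sum>g\<in>weyl_subgroup A. ?F (refl \<alpha> \<circ> g)))"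
    by (simp add: step cscale_sum)
  also have "\<dots> = cscale (-1) (R_op A \<rho> x)"
    by (simp only: reindex) (simp add: R_op_def fun_eq_iff)
  finally show ?thesis .
qed

lemma R_op_in_sign_space:
  assumes A: "A \<subseteq> \<Delta>" and x: "x \<in> CV V"
  shows "R_op A \<rho> x \<in> CV {v\<in>V. A \<subseteq> \<tau> v}"
  unfolding CV_def
proof (intro CollectI allI impI)
  fix u
  assume u: "u \<notin> {v\<in>V. A \<subseteq> \<tau> v}"
  let ?y = "R_op A \<rho> x"
  have y: "?y \<in> CV V"
    by (rule R_op_in_CV[OF A x])
  show "?y u = 0"
  proof (cases "u \<in> V")
    case True
    then obtain \<alpha> where \<alpha>: "\<alpha> \<in> A" "\<alpha> \<notin> \<tau> u"
      using u by auto
    have "?y u = wg_op V m \<tau> \<alpha> ?y u"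
      using wg_op_apply_notin[where \<tau> = \<tau> and m = m, OF finite_V y \<alpha>(2)] by simp
    also have "\<dots> = - ?y u"
      using wg_op_R_op[OF A \<alpha>(1) x] by simp
    finally show ?thesis
      by simp
  qed (use y in \<open>simp add: CV_def\<close>)
qed

lemma rho_on_sign_space:
  assumes "g \<in> weyl_subgroup A" and A: "A \<subseteq> \<Delta>" and x: "x \<in> CV {v\<in>V. A \<subseteq> \<tau> v}"
  shows "\<rho> g x = cscale (complex_of_real (sgn_W g)) x"
proof -
  have x_CV: "x \<in> CV V"
    using x CV_mono[of "{v\<in>V. A \<subseteq> \<tau> v}" V] by blast
  show ?thesis
    using assms(1)
  proof (induction rule: weyl_subgroup.induct)
    case id_in
    show ?case
      using x_CV by (simp only: rho_id sgn_W_id of_real_1) (simp add: cscale_def)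
  next
    case (refl_comp g \<alpha>)
    have g: "g \<in> weyl_subgroup \<Delta>"
      using refl_comp.hyps(1) weyl_subgroup_mono[OF A] by blast
    have \<alpha>: "\<alpha> \<in> \<Delta>"
      using refl_comp.hyps(2) A by blast
    have x_neg: "x \<in> CV {v\<in>V. \<alpha> \<in> \<tau> v}"
      using x CV_mono[of "{v\<in>V. A \<subseteq> \<tau> v}" "{v\<in>V. \<alpha> \<in> \<tau> v}"] refl_comp.hyps(2) by blast
    have "\<rho> (refl \<alpha> \<circ> g) x = wg_op V m \<tau> \<alpha> (\<rho> g x)"
      by (rule rho_refl_comp[OF g \<alpha> x_CV])
    also have "\<dots> = cscale (complex_of_real (sgn_W g)) (cscale (-1) x)"
      by (simp only: refl_comp.IH wg_op_cscale[OF finite_V] wg_op_eq_neg[OF finite_V x_neg])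
    also have "\<dots> = cscale (complex_of_real (sgn_W (refl \<alpha> \<circ> g))) x"
      by (simp add: sgn_W_refl_comp_simple[OF g \<alpha>] fun_eq_iff)
    finally show ?case .
  qed
qed

lemma R_op_on_sign_space:
  assumes A: "A \<subseteq> \<Delta>" and x: "x \<in> CV {v\<in>V. A \<subseteq> \<tau> v}"
  shows "R_op A \<rho> x = x"
proof
  fix w
  have sgn_square: "complex_of_real (sgn_W g) * complex_of_real (sgn_W g) = 1"
    if "g \<in> weyl_subgroup A" for g
  proof -
    have "(sgn_W g)\<^sup>2 = 1"
      using sgn_W_weyl_subgroup_square[OF that] simple_roots_nonzero A by blast
    then show ?thesis
      by (simp add: power2_eq_square flip: of_real_mult)
  qed
  have "card (weyl_subgroup A) \<noteq> 0"
    using finite_weyl_subgroup_subset[OF A] weyl_subgroup.id_in by auto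
  have "(\<Sum>g\<in>weyl_subgroup A. complex_of_real (sgn_W g) * \<rho> g x w) = (\<Sum>g\<in>weyl_subgroup A. x w)"
    by (rule sum.cong) (simp_all add: rho_on_sign_space[OF _ A x] mult.assoc[symmetric] sgn_square)
  with \<open>card (weyl_subgroup A) \<noteq> 0\<close> show "R_op A \<rho> x w = x w"
    by (simp add: R_op_def sum_apply)
qed

lemma image_R_op:
  assumes A: "A \<subseteq> \<Delta>"
  shows "R_op A \<rho> ` CV V = CV {v\<in>V. A \<subseteq> \<tau> v}"
proof
  show "R_op A \<rho> ` CV V \<subseteq> CV {v\<in>V. A \<subseteq> \<tau> v}"
    using R_op_in_sign_space[OF A] by (rule image_subsetI)
  show "CV {v\<in>V. A \<subseteq> \<tau> v} \<subseteq> R_op A \<rho> ` CV V"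
  proof
    fix x
    assume x: "x \<in> CV {v\<in>V. A \<subseteq> \<tau> v}"
    then have "x = R_op A \<rho> x"
      by (rule R_op_on_sign_space[OF A, symmetric])
    moreover have "x \<in> CV V"
      using x CV_mono[of "{v\<in>V. A \<subseteq> \<tau> v}" V] by blast
    ultimately show "x \<in> R_op A \<rho> ` CV V"
      by (rule image_eqI)
  qed
qed

end

theorem proposition2p8:
  fixes \<Phi> \<Delta> A :: "(real^'n) set"
    and V :: "'v set" and m :: "'v \<Rightarrow> 'v \<Rightarrow> complex" and \<tau> :: "'v \<Rightarrow> (real^'n) set"
    and \<rho> :: "(real^'n \<Rightarrow> real^'n) \<Rightarrow> ('v \<Rightarrow> complex) \<Rightarrow> ('v \<Rightarrow> complex)"
  assumes "root_system \<Phi>" and "simple_system \<Phi> \<Delta>"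
    and "weak_W_graph \<Delta> V m \<tau>"
    and "W_graph_rep \<Delta> V m \<tau> \<rho>"
    and "A \<subseteq> \<Delta>"
  shows "R_op A \<rho> ` CV V = module.span cscale (basis_vec ` {v\<in>V. A \<subseteq> \<tau> v})"
proof -
  have \<Phi>: "finite \<Phi>" "\<forall>\<alpha>\<in>\<Phi>. \<forall>\<beta>\<in>\<Phi>. refl \<alpha> \<beta> \<in> \<Phi>" "0 \<notin> \<Phi>"
    using assms(1) by (auto simp: root_system_def)
  have "\<Delta> \<subseteq> \<Phi>"
    using assms(2) by (simp add: simple_system_def)
  interpret W_graph_representation \<Delta> V m \<tau> \<rho>
  proof
    show "finite V"
      using assms(3) by (simp add: weak_W_graph_def)
    show "W_graph_rep \<Delta> V m \<tau> \<rho>"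
      by (fact assms(4))
    show "0 \<notin> \<Delta>"
      using \<open>\<Delta> \<subseteq> \<Phi>\<close> \<Phi>(3) by blast
    show "finite (weyl_subgroup \<Delta>)"
      by (rule finite_weyl_subgroup[OF \<Phi>(1) \<open>\<Delta> \<subseteq> \<Phi>\<close> \<Phi>(2)])
  qed
  have "finite {v\<in>V. A \<subseteq> \<tau> v}"
    using finite_V by simp
  then show ?thesis
    by (simp only: image_R_op[OF assms(5)] span_basis_vec)
qed

end
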